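(* Let $\mathcal P=\langle F,R\rangle$ be a program and $H$ a hypothesis. Define $IF(F,H)=\{A\mid F(A)\neq\mathcal U,\ H(A)\neq\mathcal U,\ F(A)\neq H(A)\}$, $PF_0=\emptyset$ and, for $i\ge1$, $$PF_i=\{A\mid A\leftarrow B\in R \text{ and } B\not\equiv H(A)\text{ w.r.t. } F\oplus H_{/(\mathcal{HB}_{\mathcal P}\setminus IF(F,H))\setminus PF_{i-1}}\}.$$ Then the sequence $(PF_i)_{i\ge0}$ is increasing with respect to set inclusion and reaches its limit $PF$ in a finite number of steps.
   Context: Let $\langle \mathcal{B},\le_t,\le_k\rangle$ be a complete, infinitely distributive bilattice with negation satisfying the infinitary interlacing conditions; $\wedge,\vee$ are meet/join for $\le_t$, $\otimes,\oplus$ meet/join for $\le_k$, $\mathcal U$ is the bottom of $\le_k$. A closed formula is built from ground literals and elements of $\mathcal B$ using $\wedge,\vee,\otimes,\oplus,\exists,\forall$ (quantifiers over closed terms). A program $\mathcal P=\langle F,R\rangle$ consists of a function $F$ from the Herbrand base $\mathcal{HB}_{\mathcal P}$ to $\mathcal B$ and a finite set $R$ of ground clauses $A\leftarrow B$, each ground atom being the head of at most one clause. A hypothesis (interpretation) is a function $\mathcal{HB}_{\mathcal P}\to\mathcal B$, extended to closed formulas homomorphically ($I(\neg A)=\neg I(A)$, $I(X\wedge Y)=I(X)\wedge I(Y)$ etc., $\exists$ as $\bigvee$, $\forall$ as $\bigwedge$ over closed instances). Operations on interpretations are pointwise, e.g. $(I\oplus J)(A)=I(A)\oplus J(A)$.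 $I\le J$ means $I(A)\neq\mathcal U\Rightarrow I(A)=J(A)$ for all $A$. $I_{/S}$ is $I$ on $S$ and $\mathcal U$ elsewhere. $B\equiv_I\alpha$ means $J(B)=\alpha$ for all $J$ with $I\le J$; $B\not\equiv_I\alpha$ is its negation. *)

theory Defs
  imports Main
begin

record 'b bilattice =
  leqt :: "'b \<Rightarrow> 'b \<Rightarrow> bool"
  leqk :: "'b \<Rightarrow> 'b \<Rightarrow> bool"
  bneg :: "'b \<Rightarrow> 'b"

definition is_lub :: "('b \<Rightarrow> 'b \<Rightarrow> bool) \<Rightarrow> 'b set \<Rightarrow> 'b \<Rightarrow> bool" where
  "is_lub le S x \<longleftrightarrow> (\<forall>y\<in>S. le y x) \<and> (\<forall>z. (\<forall>y\<in>S. le y z) \<longrightarrow> le x z)"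

definition is_glb :: "('b \<Rightarrow> 'b \<Rightarrow> bool) \<Rightarrow> 'b set \<Rightarrow> 'b \<Rightarrow> bool" where
  "is_glb le S x \<longleftrightarrow> (\<forall>y\<in>S. le x y) \<and> (\<forall>z. (\<forall>y\<in>S. le z y) \<longrightarrow> le z x)"

definition lub :: "('b \<Rightarrow> 'b \<Rightarrow> bool) \<Rightarrow> 'b set \<Rightarrow> 'b" where
  "lub le S = (THE x. is_lub le S x)"

definition glb :: "('b \<Rightarrow> 'b \<Rightarrow> bool) \<Rightarrow> 'b set \<Rightarrow> 'b" where
  "glb le S = (THE x. is_glb le S x)"

definition tInf :: "'b bilattice \<Rightarrow> 'b set \<Rightarrow> 'b" where "tInf BL S = glb (leqt BL) S"
definition tSup :: "'b bilattice \<Rightarrow> 'b set \<Rightarrow> 'b" where "tSup BL S = lub (leqt BL) S"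
definition kInf :: "'b bilattice \<Rightarrow> 'b set \<Rightarrow> 'b" where "kInf BL S = glb (leqk BL) S"
definition kSup :: "'b bilattice \<Rightarrow> 'b set \<Rightarrow> 'b" where "kSup BL S = lub (leqk BL) S"

definition tand :: "'b bilattice \<Rightarrow> 'b \<Rightarrow> 'b \<Rightarrow> 'b" where "tand BL a b = tInf BL {a, b}"
definition tor :: "'b bilattice \<Rightarrow> 'b \<Rightarrow> 'b \<Rightarrow> 'b" where "tor BL a b = tSup BL {a, b}"
definition kand :: "'b bilattice \<Rightarrow> 'b \<Rightarrow> 'b \<Rightarrow> 'b" where "kand BL a b = kInf BL {a, b}"
definition kor :: "'b bilattice \<Rightarrow> 'b \<Rightarrow> 'b \<Rightarrow> 'b" where "kor BL a b = kSup BL {a, b}"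

definition Ubot :: "'b bilattice \<Rightarrow> 'b" where "Ubot BL = kInf BL UNIV"

definition partial_ord :: "('b \<Rightarrow> 'b \<Rightarrow> bool) \<Rightarrow> bool" where
  "partial_ord le \<longleftrightarrow> (\<forall>x. le x x) \<and> (\<forall>x y. le x y \<longrightarrow> le y x \<longrightarrow> x = y)
     \<and> (\<forall>x y z. le x y \<longrightarrow> le y z \<longrightarrow> le x z)"

definition complete_ord :: "('b \<Rightarrow> 'b \<Rightarrow> bool) \<Rightarrow> bool" where
  "complete_ord le \<longleftrightarrow> partial_ord le \<and> (\<forall>S. \<exists>x. is_lub le S x) \<and> (\<forall>S. \<exists>x. is_glb le S x)"

definition is_negation :: "'b bilattice \<Rightarrow> bool" where
  "is_negation BL \<longleftrightarrow>
     (\<forall>a b. leqt BL a b \<longrightarrow> leqt BL (bneg BL b) (bneg BL a)) \<and>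
     (\<forall>a b. leqk BL a b \<longrightarrow> leqk BL (bneg BL a) (bneg BL b)) \<and>
     (\<forall>a. bneg BL (bneg BL a) = a)"

text \<open>Infinitary interlacing: each infinitary operation is monotone w.r.t. both orders.
  A family (a_i, b_i)_{i \<in> I} is represented by the set of its pairs P.\<close>
definition infinitary_interlaced :: "'b bilattice \<Rightarrow> bool" where
  "infinitary_interlaced BL \<longleftrightarrow>
     (\<forall>P. (\<forall>(a,b)\<in>P. leqk BL a b) \<longrightarrow>
        leqk BL (tInf BL (fst ` P)) (tInf BL (snd ` P)) \<and>
        leqk BL (tSup BL (fst ` P)) (tSup BL (snd ` P))) \<and>
     (\<forall>P. (\<forall>(a,b)\<in>P. leqt BL a b) \<longrightarrow>
        leqt BL (kInf BL (fst ` P)) (kInf BL (snd ` P)) \<and>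
        leqt BL (kSup BL (fst ` P)) (kSup BL (snd ` P)))"

definition distr :: "('b \<Rightarrow> 'b \<Rightarrow> 'b) \<Rightarrow> ('b set \<Rightarrow> 'b) \<Rightarrow> bool" where
  "distr op Op \<longleftrightarrow> (\<forall>a S. S \<noteq> {} \<longrightarrow> op a (Op S) = Op ((\<lambda>s. op a s) ` S))"

definition infinitely_distributive :: "'b bilattice \<Rightarrow> bool" where
  "infinitely_distributive BL \<longleftrightarrow>
     distr (tand BL) (tSup BL) \<and> distr (tand BL) (kInf BL) \<and> distr (tand BL) (kSup BL) \<and>
     distr (tor BL) (tInf BL) \<and> distr (tor BL) (kInf BL) \<and> distr (tor BL) (kSup BL) \<and>
     distr (kand BL) (tInf BL) \<and> distr (kand BL) (tSup BL) \<and> distr (kand BL) (kSup BL) \<and>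
     distr (kor BL) (tInf BL) \<and> distr (kor BL) (tSup BL) \<and> distr (kor BL) (kInf BL)"

definition good_bilattice :: "'b bilattice \<Rightarrow> bool" where
  "good_bilattice BL \<longleftrightarrow> complete_ord (leqt BL) \<and> complete_ord (leqk BL) \<and>
     is_negation BL \<and> infinitary_interlaced BL \<and> infinitely_distributive BL"

text \<open>'a: ground atoms (the Herbrand base), 't: closed terms (Herbrand universe),
  'b: bilattice values.  Quantifiers are represented by the function mapping each
  closed term to the corresponding closed instance of the body.\<close>

datatype ('a, 't, 'b) cformula =
    Pos 'a
  | Neg 'a
  | Val 'b
  | AndF "('a, 't, 'b) cformula" "('a, 't, 'b) cformula"
  | OrF "('a, 't, 'b) cformula" "('a, 't, 'b) cformula"
  | OtimesF "('a, 't, 'b) cformula" "('a, 't, 'b) cformula"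
  | OplusF "('a, 't, 'b) cformula" "('a, 't, 'b) cformula"
  | ExF "'t \<Rightarrow> ('a, 't, 'b) cformula"
  | AllF "'t \<Rightarrow> ('a, 't, 'b) cformula"

primrec eval :: "'b bilattice \<Rightarrow> ('a \<Rightarrow> 'b) \<Rightarrow> ('a, 't, 'b) cformula \<Rightarrow> 'b" where
  "eval BL I (Pos A) = I A"
| "eval BL I (Neg A) = bneg BL (I A)"
| "eval BL I (Val v) = v"
| "eval BL I (AndF X Y) = tand BL (eval BL I X) (eval BL I Y)"
| "eval BL I (OrF X Y) = tor BL (eval BL I X) (eval BL I Y)"
| "eval BL I (OtimesF X Y) = kand BL (eval BL I X) (eval BL I Y)"
| "eval BL I (OplusF X Y) = kor BL (eval BL I X) (eval BL I Y)"
| "eval BL I (ExF f) = tSup BL (range (\<lambda>t. eval BL I (f t)))"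
| "eval BL I (AllF f) = tInf BL (range (\<lambda>t. eval BL I (f t)))"

text \<open>A program \<langle>F, R\<rangle>: F :: 'a \<Rightarrow> 'b, R a finite set of ground clauses (head, body),
  each atom being the head of at most one clause.\<close>
definition is_program :: "('a \<Rightarrow> 'b) \<Rightarrow> ('a \<times> ('a, 't, 'b) cformula) set \<Rightarrow> bool" where
  "is_program F R \<longleftrightarrow> finite R \<and> (\<forall>A B B'. (A, B) \<in> R \<longrightarrow> (A, B') \<in> R \<longrightarrow> B = B')"

definition info_le :: "'b bilattice \<Rightarrow> ('a \<Rightarrow> 'b) \<Rightarrow> ('a \<Rightarrow> 'b) \<Rightarrow> bool" where
  "info_le BL I J \<longleftrightarrow> (\<forall>A. I A \<noteq> Ubot BL \<longrightarrow> I A = J A)"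

definition restrict_interp :: "'b bilattice \<Rightarrow> ('a \<Rightarrow> 'b) \<Rightarrow> 'a set \<Rightarrow> ('a \<Rightarrow> 'b)" where
  "restrict_interp BL I S = (\<lambda>A. if A \<in> S then I A else Ubot BL)"

definition oplus_interp :: "'b bilattice \<Rightarrow> ('a \<Rightarrow> 'b) \<Rightarrow> ('a \<Rightarrow> 'b) \<Rightarrow> ('a \<Rightarrow> 'b)" where
  "oplus_interp BL I J = (\<lambda>A. kor BL (I A) (J A))"

definition equiv_wrt :: "'b bilattice \<Rightarrow> ('a, 't, 'b) cformula \<Rightarrow> ('a \<Rightarrow> 'b) \<Rightarrow> 'b \<Rightarrow> bool" where
  "equiv_wrt BL B I \<alpha> \<longleftrightarrow> (\<forall>J. info_le BL I J \<longrightarrow> eval BL J B = \<alpha>)"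

definition IF_set :: "'b bilattice \<Rightarrow> ('a \<Rightarrow> 'b) \<Rightarrow> ('a \<Rightarrow> 'b) \<Rightarrow> 'a set" where
  "IF_set BL F H = {A. F A \<noteq> Ubot BL \<and> H A \<noteq> Ubot BL \<and> F A \<noteq> H A}"

primrec PF :: "'b bilattice \<Rightarrow> ('a \<Rightarrow> 'b) \<Rightarrow> ('a \<times> ('a, 't, 'b) cformula) set
                \<Rightarrow> ('a \<Rightarrow> 'b) \<Rightarrow> nat \<Rightarrow> 'a set" where
  "PF BL F R H 0 = {}"
| "PF BL F R H (Suc i) =
     {A. \<exists>B. (A, B) \<in> R \<and>
        \<not> equiv_wrt BL B
            (oplus_interp BL F (restrict_interp BL H ((UNIV - IF_set BL F H) - PF BL F R H i)))
            (H A)}"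

end

theory Submission
  imports Defs
begin

text \<open>Write \<open>\<Phi>(X)\<close> for the set of heads \<open>A\<close> of clauses \<open>A \<leftarrow> B\<close> with
  \<open>B \<not>\<equiv> H(A)\<close> w.r.t. \<open>F \<oplus> H\<^sub>/\<^sub>S\<^sub>-\<^sub>X\<close>, where \<open>S\<close> is the complement of \<open>IF(F,H)\<close>, so that
  \<open>PF\<^sub>i = \<Phi>\<^sup>i(\<emptyset>)\<close>. Outside \<open>IF(F,H)\<close> the values of \<open>F\<close> and \<open>H\<close> agree wherever both are
  defined, so, \<open>\<U>\<close> being the unit and \<open>\<oplus>\<close> idempotent, \<open>F \<oplus> H\<^sub>/\<^sub>T\<close> only gains information
  as \<open>T \<subseteq> S\<close> grows. As \<open>B \<equiv>\<^sub>I \<alpha>\<close> persists when \<open>I\<close> gains information, \<open>\<Phi>\<close> is monotone;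
  hence its iterates from \<open>\<emptyset>\<close> increase, and they stabilise because they all lie in
  the finite set of heads of \<open>R\<close>.\<close>

lemma funpow_bot_eventually_const:
  fixes \<Phi> :: "'a::order_bot \<Rightarrow> 'a"
  assumes "mono \<Phi>" and "finite (range (\<lambda>i. (\<Phi> ^^ i) bot))"
  shows "\<exists>n. \<forall>m\<ge>n. (\<Phi> ^^ m) bot = (\<Phi> ^^ n) bot"
proof -
  have "\<exists>N. (\<forall>n\<le>N. \<forall>m\<le>N. m < n \<longrightarrow> (\<Phi> ^^ m) bot < (\<Phi> ^^ n) bot) \<and>
            (\<forall>n\<ge>N. (\<Phi> ^^ N) bot = (\<Phi> ^^ n) bot)"
    by (rule finite_mono_remains_stable_implies_strict_prefix) (use assms mono_funpow in auto)
  then show ?thesis by (metis (mono_tags))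
qed

lemma lub_eqI:
  assumes "partial_ord le" and "is_lub le S x"
  shows "lub le S = x"
  unfolding lub_def
proof (rule the_equality)
  show "is_lub le S x" by fact
  fix y assume "is_lub le S y"
  with assms show "y = x" unfolding is_lub_def partial_ord_def by metis
qed

lemma glb_is_glb:
  assumes "complete_ord le"
  shows "is_glb le S (glb le S)"
proof -
  from assms obtain x where x: "is_glb le S x" unfolding complete_ord_def by blast
  have "glb le S = x" unfolding glb_def
  proof (rule the_equality)
    show "is_glb le S x" by fact
    fix y assume "is_glb le S y"
    with assms x show "y = x" unfolding is_glb_def complete_ord_def partial_ord_def by metis
  qed
  with x show ?thesis by simp
qed

lemma Ubot_least:
  assumes "complete_ord (leqk BL)"
  shows "leqk BL (Ubot BL) a"
  using glb_is_glb[OF assms, of UNIV] unfolding Ubot_def kInf_def is_glb_def by simp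

lemma kor_Ubot_right:
  assumes "complete_ord (leqk BL)"
  shows "kor BL a (Ubot BL) = a"
proof -
  have po: "partial_ord (leqk BL)" using assms unfolding complete_ord_def by simp
  then have "is_lub (leqk BL) {a, Ubot BL} a"
    using Ubot_least[OF assms] unfolding is_lub_def partial_ord_def by blast
  then show ?thesis unfolding kor_def kSup_def by (rule lub_eqI[OF po])
qed

lemma kor_idem:
  assumes "partial_ord (leqk BL)"
  shows "kor BL a a = a"
proof -
  have "is_lub (leqk BL) {a, a} a" using assms unfolding is_lub_def partial_ord_def by blast
  then show ?thesis unfolding kor_def kSup_def by (rule lub_eqI[OF assms])
qed

lemma equiv_wrt_info_le:
  assumes "info_le BL I' I" and "equiv_wrt BL B I' \<alpha>"
  shows "equiv_wrt BL B I \<alpha>"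
  using assms unfolding equiv_wrt_def info_le_def by metis

lemma info_le_oplus_restrict:
  assumes co: "complete_ord (leqk BL)" and "T' \<subseteq> T" and "T \<inter> IF_set BL F H = {}"
  shows "info_le BL (oplus_interp BL F (restrict_interp BL H T'))
                    (oplus_interp BL F (restrict_interp BL H T))"
  unfolding info_le_def oplus_interp_def restrict_interp_def
proof (intro allI impI)
  fix A
  assume defined: "kor BL (F A) (if A \<in> T' then H A else Ubot BL) \<noteq> Ubot BL"
  show "kor BL (F A) (if A \<in> T' then H A else Ubot BL) =
        kor BL (F A) (if A \<in> T then H A else Ubot BL)"
  proof (cases "A \<in> T' \<or> A \<notin> T")
    case True
    with assms(2) show ?thesis by auto
  next
    case False
    then have "F A \<noteq> Ubot BL" using defined kor_Ubot_right[OF co] by auto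
    moreover have "A \<notin> IF_set BL F H" using False assms(3) by auto
    ultimately have "H A = Ubot BL \<or> H A = F A" unfolding IF_set_def by auto
    moreover have "partial_ord (leqk BL)" using co unfolding complete_ord_def by simp
    ultimately show ?thesis using False kor_Ubot_right[OF co] kor_idem[of BL "F A"] by auto
  qed
qed

definition PF_step :: "'b bilattice \<Rightarrow> ('a \<Rightarrow> 'b) \<Rightarrow> ('a \<times> ('a, 't, 'b) cformula) set
                        \<Rightarrow> ('a \<Rightarrow> 'b) \<Rightarrow> 'a set \<Rightarrow> 'a set" where
  "PF_step BL F R H X =
     {A. \<exists>B. (A, B) \<in> R \<and>
        \<not> equiv_wrt BL B
            (oplus_interp BL F (restrict_interp BL H ((UNIV - IF_set BL F H) - X)))
            (H A)}"

lemma PF_eq_funpow: "PF BL F R H i = (PF_step BL F R H ^^ i) {}"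
  by (induction i) (simp_all add: PF_step_def)

lemma mono_PF_step:
  fixes BL :: "'b bilattice" and F H :: "'a \<Rightarrow> 'b"
  assumes "complete_ord (leqk BL)"
  shows "mono (PF_step BL F R H)"
proof (rule monoI)
  fix X Y :: "'a set"
  assume "X \<subseteq> Y"
  then have "info_le BL (oplus_interp BL F (restrict_interp BL H ((UNIV - IF_set BL F H) - Y)))
                        (oplus_interp BL F (restrict_interp BL H ((UNIV - IF_set BL F H) - X)))"
    by (intro info_le_oplus_restrict[OF assms]) blast+
  then show "PF_step BL F R H X \<subseteq> PF_step BL F R H Y"
    unfolding PF_step_def by (blast dest: equiv_wrt_info_le)
qed

lemma PF_step_subset_heads: "PF_step BL F R H X \<subseteq> fst ` R"
  unfolding PF_step_def by (auto intro: rev_image_eqI)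

theorem mainTheorem4:
  fixes BL :: "'b bilattice"
    and F :: "'a \<Rightarrow> 'b"
    and R :: "('a \<times> ('a, 't, 'b) cformula) set"
    and H :: "'a \<Rightarrow> 'b"
  assumes "good_bilattice BL"
    and "is_program F R"
  shows "(\<forall>i j. i \<le> j \<longrightarrow> PF BL F R H i \<subseteq> PF BL F R H j) \<and>
         (\<exists>n. \<forall>m\<ge>n. PF BL F R H m = PF BL F R H n)"
proof -
  let ?\<Phi> = "PF_step BL F R H"
  have "complete_ord (leqk BL)" using assms(1) unfolding good_bilattice_def by simp
  then have mono: "mono ?\<Phi>" by (rule mono_PF_step)
  have "(?\<Phi> ^^ i) {} \<subseteq> fst ` R" for i
    by (cases i) (simp_all add: PF_step_subset_heads)
  then have "range (\<lambda>i. (?\<Phi> ^^ i) {}) \<subseteq> Pow (fst ` R)" by blast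
  moreover have "finite (fst ` R)" using assms(2) unfolding is_program_def by simp
  ultimately have finite_iterates: "finite (range (\<lambda>i. (?\<Phi> ^^ i) bot))"
    by (metis finite_Pow_iff finite_subset)
  have "\<forall>i j. i \<le> j \<longrightarrow> PF BL F R H i \<subseteq> PF BL F R H j"
    unfolding PF_eq_funpow using funpow_decreasing[OF _ mono] by simp
  moreover have "\<exists>n. \<forall>m\<ge>n. PF BL F R H m = PF BL F R H n"
    unfolding PF_eq_funpow using funpow_bot_eventually_const[OF mono finite_iterates] by simp
  ultimately show ?thesis ..
qed

end
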